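(* The unary unbiased black-box complexity of the $\mathrm{DLB}$ problem is $\Omega(n^2)$.
   Context: Let $n$ be an even positive integer. For $x\in\{0,1\}^n$ consider the blocks $(x_{2\ell+1},x_{2\ell+2})$, $\ell=0,\dots,\frac n2-1$. If $x\neq(1,\dots,1)$, let $m$ be the smallest $\ell$ with $x_{2\ell+1}\neq 1$ or $x_{2\ell+2}\neq 1$, and define $\mathrm{DLB}(x)=2m+1$ if $x_{2m+1}+x_{2m+2}=0$ and $\mathrm{DLB}(x)=2m$ if $x_{2m+1}+x_{2m+2}=1$; set $\mathrm{DLB}(1,\dots,1)=n$. The $\mathrm{DLB}$ problem is to maximize $\mathrm{DLB}$. A unary unbiased variation operator $V$ assigns to each $x\in\{0,1\}^n$ a probability distribution $V(x)$ on $\{0,1\}^n$ such that for all $x,y,z$, $\Pr[y=V(x)]=\Pr[y\oplus z=V(x\oplus z)]$, and for all permutations $\sigma$ of $[1..n]$, $\Pr[y=V(x)]=\Pr[\sigma(y)=V(\sigma(x))]$, where $\sigma(x)=(x_{\sigma(1)},\dots,x_{\sigma(n)})$. A unary unbiased black-box algorithm generates $x^{(0)}$ uniformly at random; for $t=1,2,\dots$, based solely on $(f(x^{(0)}),\dots,f(x^{(t-1)}))$, it chooses a unary unbiased variation operator $V$ and an index $i\in[0..t-1]$ and samples $x^{(t)}\sim V(x^{(i)})$; each search point is evaluated when generated. The runtime is the number of fitness evaluations until (and including) the first evaluation of an optimum. The unary unbiased black-box complexity of $\mathrm{DLB}$ is the infimum over all such algorithms of the expected runtime on $\mathrm{DLB}$.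 *)

theory Defs
  imports "HOL-Probability.Probability" "HOL-Combinatorics.Permutations"
begin

text \<open>Bit strings of length n are boolean lists of length n; position i (0-based)
  corresponds to x_{i+1} in the paper.\<close>

definition bitstrings :: "nat \<Rightarrow> bool list set" where
  "bitstrings n = {x. length x = n}"

text \<open>The DLB function (n even). Block l consists of positions 2l and 2l+1 (0-based).\<close>
definition dlb :: "nat \<Rightarrow> bool list \<Rightarrow> nat" where
  "dlb n x =
    (if \<forall>l < n div 2. x ! (2*l) \<and> x ! (2*l+1) then n
     else (let m = (LEAST l. l < n div 2 \<and> \<not> (x ! (2*l) \<and> x ! (2*l+1)))
           in if \<not> x ! (2*m) \<and> \<not> x ! (2*m+1) then 2*m+1 else 2*m))"

definition xor_bits :: "bool list \<Rightarrow> bool list \<Rightarrow> bool list" where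
  "xor_bits x z = map2 (\<noteq>) x z"

definition perm_bits :: "nat \<Rightarrow> (nat \<Rightarrow> nat) \<Rightarrow> bool list \<Rightarrow> bool list" where
  "perm_bits n \<sigma> x = map (\<lambda>i. x ! \<sigma> i) [0..<n]"

type_synonym variation_op = "bool list \<Rightarrow> bool list pmf"

definition unary_unbiased_op :: "nat \<Rightarrow> variation_op \<Rightarrow> bool" where
  "unary_unbiased_op n V \<longleftrightarrow>
     (\<forall>x \<in> bitstrings n. set_pmf (V x) \<subseteq> bitstrings n) \<and>
     (\<forall>x \<in> bitstrings n. \<forall>y \<in> bitstrings n. \<forall>z \<in> bitstrings n.
        pmf (V x) y = pmf (V (xor_bits x z)) (xor_bits y z)) \<and>
     (\<forall>x \<in> bitstrings n. \<forall>y \<in> bitstrings n. \<forall>\<sigma>. \<sigma> permutes {0..<n} \<longrightarrow>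
        pmf (V x) y = pmf (V (perm_bits n \<sigma> x)) (perm_bits n \<sigma> y))"

text \<open>A unary unbiased black-box algorithm: given the fitness history
  (f(x^(0)), ..., f(x^(t-1))), it (possibly randomly) chooses a unary unbiased
  variation operator V and an index i < t.\<close>
type_synonym ub_algorithm = "nat list \<Rightarrow> (variation_op \<times> nat) pmf"

definition unary_unbiased_alg :: "nat \<Rightarrow> ub_algorithm \<Rightarrow> bool" where
  "unary_unbiased_alg n A \<longleftrightarrow>
     (\<forall>hs. hs \<noteq> [] \<longrightarrow> (\<forall>(V, i) \<in> set_pmf (A hs). i < length hs \<and> unary_unbiased_op n V))"

text \<open>Distribution of the first k+1 search points (x^(0), ..., x^(k)).\<close>
fun history :: "nat \<Rightarrow> (bool list \<Rightarrow> nat) \<Rightarrow> ub_algorithm \<Rightarrow> nat \<Rightarrow> bool list list pmf" where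
  "history n f A 0 = map_pmf (\<lambda>x. [x]) (pmf_of_set (bitstrings n))"
| "history n f A (Suc k) =
     bind_pmf (history n f A k) (\<lambda>xs.
       bind_pmf (A (map f xs)) (\<lambda>(V, i). map_pmf (\<lambda>y. xs @ [y]) (V (xs ! i))))"

definition is_optimum :: "nat \<Rightarrow> (bool list \<Rightarrow> nat) \<Rightarrow> bool list \<Rightarrow> bool" where
  "is_optimum n f x \<longleftrightarrow> x \<in> bitstrings n \<and> (\<forall>y \<in> bitstrings n. f y \<le> f x)"

text \<open>Expected runtime T (number of evaluations up to and including the first optimum),
  via E[T] = sum_{k>=0} Pr[T > k] = sum_k Pr[none of x^(0..k) optimal]; this is
  infinite if the optimum is not found with probability 1.\<close>
definition expected_runtime :: "nat \<Rightarrow> (bool list \<Rightarrow> nat) \<Rightarrow> ub_algorithm \<Rightarrow> ennreal" where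
  "expected_runtime n f A =
     (\<Sum>k. ennreal (measure_pmf.prob (history n f A k) {xs. \<forall>x \<in> set xs. \<not> is_optimum n f x}))"

definition unary_unbiased_bbc :: "nat \<Rightarrow> (bool list \<Rightarrow> nat) \<Rightarrow> ennreal" where
  "unary_unbiased_bbc n f = (INF A \<in> {A. unary_unbiased_alg n A}. expected_runtime n f A)"

end

theory Submission
  imports Defs
begin

(* The potential of a bit string is the number of leading blocks on which it is constant (both
   values count, since an unbiased operator can complement all bits at once); the potential of a
   history is the maximum over its points, and an optimum of DLB has potential n/2.  The expected
   square of the potential grows by at most 8 per step, so by Markov's inequality an unbiased
   algorithm still has not found the optimum after n^2/64 steps with probability at least 1/2.

   DLB values and the potential M of a history depend only
   on the first 2M+2 bits of its points, so XOR-ing all points with a mask vanishing there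
   preserves the distribution of the history; averaging over these masks makes the later bits of
   the next offspring uniform, and its potential reaches i with probability at most 4^(M+1-i)
   times the probability that its first L = 2M+2 bits are constant.  A parent of potential at
   most M has a zero and a one among these L bits, and then an unbiased operator produces an
   offspring that is constant on them with probability at most 2/(L+2). *)

section \<open>Bit strings\<close>

lemma finite_bitstrings: "finite (bitstrings n)"
  unfolding bitstrings_def using finite_lists_length_eq[of "UNIV :: bool set" n] by simp

lemma bitstrings_nonempty: "bitstrings n \<noteq> {}"
  by (auto simp: bitstrings_def intro!: exI[of _ "replicate n True"])

lemma card_bitstrings_fixing:
  assumes "I \<subseteq> {..<n}"
  shows "card {w \<in> bitstrings n. \<forall>k\<in>I. w ! k = c k} = 2 ^ (n - card I)"
proof -
  define F where "F = (\<Pi>\<^sub>E i\<in>{..<n}. if i \<in> I then {c i} else (UNIV :: bool set))"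
  have "bij_betw (\<lambda>w. restrict (nth w) {..<n}) {w \<in> bitstrings n. \<forall>k\<in>I. w ! k = c k} F"
  proof (rule bij_betw_byWitness[where f' = "\<lambda>f. map f [0..<n]"])
    show "\<forall>w\<in>{w \<in> bitstrings n. \<forall>k\<in>I. w ! k = c k}. map (restrict (nth w) {..<n}) [0..<n] = w"
      by (auto simp: bitstrings_def intro: nth_equalityI)
    show "\<forall>f\<in>F. restrict (nth (map f [0..<n])) {..<n} = f"
      by (auto simp: F_def PiE_def extensional_def fun_eq_iff)
    show "(\<lambda>w. restrict (nth w) {..<n}) ` {w \<in> bitstrings n. \<forall>k\<in>I. w ! k = c k} \<subseteq> F"
      using assms by (auto simp: F_def)
    show "(\<lambda>f. map f [0..<n]) ` F \<subseteq> {w \<in> bitstrings n. \<forall>k\<in>I. w ! k = c k}"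
      using assms by (auto simp: F_def bitstrings_def PiE_def Pi_def)
  qed
  then have "card {w \<in> bitstrings n. \<forall>k\<in>I. w ! k = c k} = card F"
    by (rule bij_betw_same_card)
  also have "\<dots> = (\<Prod>i<n. if i \<in> I then 1 else 2)"
    unfolding F_def by (simp add: card_PiE) (intro prod.cong; simp add: card_UNIV_bool)
  also have "\<dots> = 2 ^ card ({..<n} - I)"
    by (simp add: prod.If_cases Diff_eq)
  also have "card ({..<n} - I) = n - card I"
    using assms by (simp add: card_Diff_subset finite_subset)
  finally show ?thesis .
qed

lemma card_bitstrings: "card (bitstrings n) = 2 ^ n"
  using card_bitstrings_fixing[of "{}" n] by simp

lemma length_xor_bits [simp]: "length (xor_bits x z) = min (length x) (length z)"
  by (simp add: xor_bits_def)

lemma nth_xor_bits [simp]: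
  "i < length x \<Longrightarrow> i < length z \<Longrightarrow> xor_bits x z ! i = (x ! i \<noteq> z ! i)"
  by (simp add: xor_bits_def)

lemma xor_bits_in_bitstrings: "x \<in> bitstrings n \<Longrightarrow> z \<in> bitstrings n \<Longrightarrow> xor_bits x z \<in> bitstrings n"
  by (simp add: bitstrings_def)

lemma xor_bits_cancel: "x \<in> bitstrings n \<Longrightarrow> z \<in> bitstrings n \<Longrightarrow> xor_bits (xor_bits x z) z = x"
  by (rule nth_equalityI) (auto simp: bitstrings_def)

lemma length_perm_bits [simp]: "length (perm_bits n \<sigma> x) = n"
  by (simp add: perm_bits_def)

lemma nth_perm_bits [simp]: "i < n \<Longrightarrow> perm_bits n \<sigma> x ! i = x ! \<sigma> i"
  by (simp add: perm_bits_def)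

section \<open>The potential\<close>

definition const_prefix :: "bool \<Rightarrow> bool list \<Rightarrow> nat \<Rightarrow> bool" where
  "const_prefix b x k \<longleftrightarrow> (\<forall>j<k. x ! j = b)"

definition const_blocks :: "nat \<Rightarrow> bool list \<Rightarrow> nat" where
  "const_blocks n x = Max {k. k \<le> n div 2 \<and> (\<exists>b. const_prefix b x (2 * k))}"

fun max_const_blocks :: "nat \<Rightarrow> bool list list \<Rightarrow> nat" where
  "max_const_blocks n [] = 0"
| "max_const_blocks n (x # xs) = max (const_blocks n x) (max_const_blocks n xs)"

lemma const_prefix_mono: "const_prefix b x k \<Longrightarrow> j \<le> k \<Longrightarrow> const_prefix b x j"
  by (auto simp: const_prefix_def)

lemma le_const_blocks_iff:
  "k \<le> const_blocks n x \<longleftrightarrow> k \<le> n div 2 \<and> (\<exists>b. const_prefix b x (2 * k))"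
proof -
  define S where "S = {k. k \<le> n div 2 \<and> (\<exists>b. const_prefix b x (2 * k))}"
  have fin: "finite S"
    unfolding S_def by (rule finite_subset[of _ "{..n div 2}"]) auto
  have "0 \<in> S"
    by (simp add: S_def const_prefix_def)
  then have "const_blocks n x \<in> S"
    unfolding const_blocks_def S_def[symmetric] using fin by (intro Max_in) auto
  then have "k \<in> S" if "k \<le> const_blocks n x"
    using that const_prefix_mono[of _ x "2 * const_blocks n x" "2 * k"] by (auto simp: S_def)
  moreover have "k \<le> const_blocks n x" if "k \<in> S"
    unfolding const_blocks_def S_def[symmetric] using fin that by (rule Max_ge)
  ultimately show ?thesis
    unfolding S_def by blast
qed

lemma const_blocks_le: "const_blocks n x \<le> n div 2"
  using le_const_blocks_iff by blast

lemma max_const_blocks_snoc: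
  "max_const_blocks n (xs @ [y]) = max (max_const_blocks n xs) (const_blocks n y)"
  by (induction xs) auto

lemma const_blocks_le_max_const_blocks: "x \<in> set xs \<Longrightarrow> const_blocks n x \<le> max_const_blocks n xs"
  by (induction xs) auto

lemma max_const_blocks_le: "max_const_blocks n xs \<le> n div 2"
  by (induction xs) (auto simp: const_blocks_le)

lemma max_const_blocks_map:
  "(\<And>x. x \<in> set xs \<Longrightarrow> const_blocks n (h x) = const_blocks n x) \<Longrightarrow>
    max_const_blocks n (map h xs) = max_const_blocks n xs"
  by (induction xs) auto

lemma nth_eq_if_take_eq:
  "take k x' = take k x \<Longrightarrow> j < k \<Longrightarrow> j < length x \<Longrightarrow> j < length x' \<Longrightarrow> x' ! j = x ! j"
  by (metis nth_take)

lemma const_blocks_eq_if_take_eq: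
  assumes len: "length x = n" "length x' = n"
    and agree: "take (2 * const_blocks n x + 2) x' = take (2 * const_blocks n x + 2) x"
  shows "const_blocks n x' = const_blocks n x"
proof -
  have "const_prefix b x' (2 * k) = const_prefix b x (2 * k)"
    if "k \<le> n div 2" "k \<le> const_blocks n x + 1" for b k
  proof -
    have "x' ! j = x ! j" if "j < 2 * k" for j
      using that \<open>k \<le> n div 2\<close> \<open>k \<le> const_blocks n x + 1\<close> len
      by (intro nth_eq_if_take_eq[OF agree]) auto
    then show ?thesis
      by (auto simp: const_prefix_def)
  qed
  then have "k \<le> const_blocks n x' \<longleftrightarrow> k \<le> const_blocks n x" if "k \<le> const_blocks n x + 1" for k
    using that by (metis le_const_blocks_iff)
  from this[of "const_blocks n x"] this[of "const_blocks n x + 1"] show ?thesis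
    by simp
qed

lemma const_prefix_True_if_blocks_True:
  assumes "\<forall>l<m. x ! (2 * l) \<and> x ! (2 * l + 1)"
  shows "const_prefix True x (2 * m)"
  unfolding const_prefix_def
proof (intro allI impI)
  fix j assume "j < 2 * m"
  then have "x ! (2 * (j div 2)) \<and> x ! (2 * (j div 2) + 1)"
    using assms by simp
  moreover have "j = 2 * (j div 2) \<or> j = 2 * (j div 2) + 1"
    by linarith
  ultimately show "x ! j = True"
    by metis
qed

lemma dlb_eq_if_take_eq:
  assumes len: "length x = n" "length x' = n"
    and agree: "take (2 * const_blocks n x + 2) x' = take (2 * const_blocks n x + 2) x"
  shows "dlb n x' = dlb n x"
proof (cases "\<forall>l < n div 2. x ! (2 * l) \<and> x ! (2 * l + 1)")
  case True
  then have "const_prefix True x (2 * (n div 2))"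
    by (intro const_prefix_True_if_blocks_True)
  then have "n div 2 \<le> const_blocks n x"
    by (auto simp: le_const_blocks_iff)
  then have "const_blocks n x = n div 2"
    using const_blocks_le[of n x] by simp
  then have "x' = x"
    using agree len by (simp add: take_all)
  then show ?thesis
    by simp
next
  case False
  define P where "P = (\<lambda>y l. l < n div 2 \<and> \<not> (y ! (2 * l) \<and> y ! (2 * l + 1)))"
  define m where "m = (LEAST l. P x l)"
  have Pm: "P x m"
    unfolding m_def using False by (metis LeastI P_def)
  have below_m: "\<not> P x l" if "l < m" for l
    using that unfolding m_def by (rule not_less_Least)
  have "const_prefix True x (2 * m)"
    using below_m Pm by (intro const_prefix_True_if_blocks_True) (auto simp: P_def)
  then have "m \<le> const_blocks n x"
    using Pm by (auto simp: le_const_blocks_iff P_def)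
  then have same_block: "x' ! (2 * l) = x ! (2 * l) \<and> x' ! (2 * l + 1) = x ! (2 * l + 1)"
    if "l \<le> m" for l
  proof -
    have "2 * l + 1 < 2 * const_blocks n x + 2" "2 * l + 1 < n"
      using that \<open>m \<le> const_blocks n x\<close> Pm by (auto simp: P_def)
    then show ?thesis
      using len by (simp add: nth_eq_if_take_eq[OF agree])
  qed
  then have same_P: "P x' l = P x l" if "l \<le> m" for l
    using that by (auto simp: P_def)
  have "(LEAST l. P x' l) = m"
  proof (rule Least_equality)
    show "P x' m"
      using same_P[of m] Pm by simp
    show "m \<le> l" if "P x' l" for l
      using same_P[of l] that below_m[of l] by (cases "l < m") auto
  qed
  moreover have "\<not> (\<forall>l < n div 2. x' ! (2 * l) \<and> x' ! (2 * l + 1))"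
    using same_P[of m] Pm by (auto simp: P_def)
  ultimately show ?thesis
    using False same_block[of m] unfolding dlb_def Let_def P_def m_def by auto
qed

section \<open>Unbiased variation operators\<close>

lemma set_pmf_unary_unbiased_op:
  "unary_unbiased_op n V \<Longrightarrow> x \<in> bitstrings n \<Longrightarrow> set_pmf (V x) \<subseteq> bitstrings n"
  unfolding unary_unbiased_op_def by blast

lemma pmf_unary_unbiased_op_xor:
  "unary_unbiased_op n V \<Longrightarrow> x \<in> bitstrings n \<Longrightarrow> y \<in> bitstrings n \<Longrightarrow> z \<in> bitstrings n \<Longrightarrow>
    pmf (V x) y = pmf (V (xor_bits x z)) (xor_bits y z)"
  unfolding unary_unbiased_op_def by blast

lemma map_pmf_involution_eqI:
  assumes M: "set_pmf M \<subseteq> B" and N: "set_pmf N \<subseteq> B"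
    and g: "\<And>y. y \<in> B \<Longrightarrow> g y \<in> B" "\<And>y. y \<in> B \<Longrightarrow> g (g y) = y"
    and pmf_eq: "\<And>y. y \<in> B \<Longrightarrow> pmf M y = pmf N (g y)"
  shows "map_pmf g M = N"
proof (rule pmf_eqI)
  fix y
  have "pmf (map_pmf g M) y = measure M (g -` {y} \<inter> set_pmf M)"
    by (simp add: pmf_map measure_Int_set_pmf)
  also have "g -` {y} \<inter> set_pmf M = (if y \<in> B then {g y} \<inter> set_pmf M else {})"
    using M g by auto
  finally show "pmf (map_pmf g M) y = pmf N y"
    using N g pmf_eq[of "g y"]
    by (cases "y \<in> B") (auto simp: measure_Int_set_pmf measure_pmf_single set_pmf_iff)
qed

lemma unary_unbiased_op_xor:
  assumes V: "unary_unbiased_op n V" and x: "x \<in> bitstrings n" and z: "z \<in> bitstrings n"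
  shows "V (xor_bits x z) = map_pmf (\<lambda>y. xor_bits y z) (V x)"
proof (rule sym, rule map_pmf_involution_eqI)
  show "set_pmf (V x) \<subseteq> bitstrings n" "set_pmf (V (xor_bits x z)) \<subseteq> bitstrings n"
    using V x z xor_bits_in_bitstrings set_pmf_unary_unbiased_op by blast+
  show "pmf (V x) y = pmf (V (xor_bits x z)) (xor_bits y z)" if "y \<in> bitstrings n" for y
    using V x that z by (rule pmf_unary_unbiased_op_xor)
  show "xor_bits y z \<in> bitstrings n" "xor_bits (xor_bits y z) z = y" if "y \<in> bitstrings n" for y
    using that z by (simp_all add: xor_bits_in_bitstrings xor_bits_cancel)
qed

lemma unary_unbiased_op_perm_involution:
  assumes V: "unary_unbiased_op n V" and x: "x \<in> bitstrings n"
    and \<sigma>: "\<sigma> permutes {0..<n}" "\<And>i. \<sigma> (\<sigma> i) = i"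
  shows "V (perm_bits n \<sigma> x) = map_pmf (perm_bits n \<sigma>) (V x)"
proof (rule sym, rule map_pmf_involution_eqI)
  show "set_pmf (V x) \<subseteq> bitstrings n" "set_pmf (V (perm_bits n \<sigma> x)) \<subseteq> bitstrings n"
    using set_pmf_unary_unbiased_op[OF V] x by (auto simp: bitstrings_def)
  show "pmf (V x) y = pmf (V (perm_bits n \<sigma> x)) (perm_bits n \<sigma> y)" if "y \<in> bitstrings n" for y
    using V x that \<sigma>(1) unfolding unary_unbiased_op_def by blast
  show "perm_bits n \<sigma> (perm_bits n \<sigma> y) = y" if "y \<in> bitstrings n" for y
    using that \<sigma> permutes_in_image[OF \<sigma>(1)] by (intro nth_equalityI) (auto simp: bitstrings_def)
qed (simp add: bitstrings_def)

definition indicator_bits :: "nat \<Rightarrow> nat set \<Rightarrow> bool list" where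
  "indicator_bits n A = map (\<lambda>j. j \<in> A) [0..<n]"

lemma indicator_bits_in_bitstrings: "indicator_bits n A \<in> bitstrings n"
  by (simp add: indicator_bits_def bitstrings_def)

lemma perm_bits_transpose_eq_xor_bits:
  assumes "x \<in> bitstrings n" "a < n" "k < n" "x ! k \<noteq> x ! a"
  shows "perm_bits n (Transposition.transpose a k) x = xor_bits x (indicator_bits n {a, k})"
  using assms
  by (intro nth_equalityI)
    (auto simp: bitstrings_def indicator_bits_def Transposition.transpose_def)

text \<open>For k in K the transposition of a and k acts on x as flipping both bits, so by unbiasedness
  the offspring, flipped at a and k, is constant on the first L bits as likely as it is
  unflipped; these events are pairwise disjoint.\<close>

lemma card_mult_measure_const_prefix_le_1:
  assumes V: "unary_unbiased_op n V" and x: "x \<in> bitstrings n" and "L \<le> n"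
    and a: "a < L" and K: "K \<subseteq> {..<L}" and differ: "\<And>k. k \<in> K \<Longrightarrow> x ! k \<noteq> x ! a"
  shows "real (card K + 1) * measure (V x) {y. const_prefix b y L} \<le> 1"
proof -
  define C where "C = {y. const_prefix b y L}"
  define E where
    "E k = (if k = a then C else (\<lambda>y. xor_bits y (indicator_bits n {a, k})) -` C \<inter> bitstrings n)"
    for k
  have "a \<notin> K" "finite K"
    using differ K finite_subset by auto
  have supp: "set_pmf (V x) \<subseteq> bitstrings n"
    using V x by (rule set_pmf_unary_unbiased_op)
  have measure_E: "measure (V x) (E k) = measure (V x) C" if "k \<in> K" for k
  proof -
    define \<sigma> where "\<sigma> = Transposition.transpose a k"
    define \<delta> where "\<delta> = indicator_bits n {a, k}"
    have "k \<noteq> a" "k < L"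
      using that \<open>a \<notin> K\<close> K by auto
    have "\<sigma> ` {..<L} = {..<L}"
      using a \<open>k < L\<close> unfolding \<sigma>_def by (intro permutes_image permutes_swap_id) auto
    have "const_prefix b (perm_bits n \<sigma> y) L \<longleftrightarrow> const_prefix b y L" for y
    proof -
      have "const_prefix b (perm_bits n \<sigma> y) L \<longleftrightarrow> (\<forall>j\<in>{..<L}. y ! \<sigma> j = b)"
        using \<open>L \<le> n\<close> by (auto simp: const_prefix_def)
      also have "\<dots> \<longleftrightarrow> (\<forall>j\<in>\<sigma> ` {..<L}. y ! j = b)"
        by simp
      finally show ?thesis
        unfolding const_prefix_def using \<open>\<sigma> ` {..<L} = {..<L}\<close> by auto
    qed
    then have "measure (V x) C = measure (V x) (perm_bits n \<sigma> -` C)"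
      by (simp add: C_def)
    also have "\<dots> = measure (map_pmf (perm_bits n \<sigma>) (V x)) C"
      by simp
    also have "map_pmf (perm_bits n \<sigma>) (V x) = map_pmf (\<lambda>y. xor_bits y \<delta>) (V x)"
      using unary_unbiased_op_perm_involution[OF V x, of \<sigma>] \<open>k < L\<close> a \<open>L \<le> n\<close>
        unary_unbiased_op_xor[OF V x indicator_bits_in_bitstrings]
        perm_bits_transpose_eq_xor_bits[OF x, of a k] differ[OF that]
      unfolding \<sigma>_def \<delta>_def by (simp add: permutes_swap_id transpose_involutory)
    also have "measure \<dots> C = measure (V x) ((\<lambda>y. xor_bits y \<delta>) -` C \<inter> set_pmf (V x))"
      by (simp add: measure_Int_set_pmf)
    also have "(\<lambda>y. xor_bits y \<delta>) -` C \<inter> set_pmf (V x) = E k \<inter> set_pmf (V x)"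
      using supp \<open>k \<noteq> a\<close> by (auto simp: E_def \<delta>_def)
    finally show ?thesis
      by (simp add: measure_Int_set_pmf)
  qed
  have in_E_a: "y ! a = b" if "y \<in> E a" for y
    using that a by (simp add: E_def C_def const_prefix_def)
  have in_E: "y ! l = (b \<noteq> (l = a \<or> l = k))" if "y \<in> E k" "k \<noteq> a" "l < L" for y k l
    using that \<open>L \<le> n\<close>
    by (auto simp: E_def C_def const_prefix_def indicator_bits_def bitstrings_def)
  have "disjoint_family_on E (insert a K)"
  proof (unfold disjoint_family_on_def, intro ballI impI)
    fix i j assume "i \<in> insert a K" "j \<in> insert a K" "i \<noteq> j"
    then consider "i = a" "j \<in> K" | "j = a" "i \<in> K" | "i \<in> K" "j \<in> K"
      by blast
    then show "E i \<inter> E j = {}"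
    proof cases
      case 1
      then show ?thesis
        using in_E_a in_E[of _ j a] \<open>a \<notin> K\<close> a by fastforce
    next
      case 2
      then show ?thesis
        using in_E_a in_E[of _ i a] \<open>a \<notin> K\<close> a by fastforce
    next
      case 3
      then show ?thesis
        using in_E[of _ i i] in_E[of _ j i] \<open>a \<notin> K\<close> \<open>i \<noteq> j\<close> K by fastforce
    qed
  qed
  then have "measure (V x) (\<Union>k\<in>insert a K. E k) = (\<Sum>k\<in>insert a K. measure (V x) (E k))"
    using \<open>finite K\<close> by (intro measure_pmf.finite_measure_finite_Union) auto
  also have "\<dots> = real (card K + 1) * measure (V x) C"
    using measure_E \<open>finite K\<close> \<open>a \<notin> K\<close> by (simp add: E_def algebra_simps)
  finally show ?thesis
    using measure_pmf.prob_le_1 unfolding C_def by metis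
qed

lemma measure_const_prefix_le:
  assumes V: "unary_unbiased_op n V" and x: "x \<in> bitstrings n" and "L \<le> n"
    and not_const: "\<not> const_prefix True x L" "\<not> const_prefix False x L"
  shows "measure (V x) {y. const_prefix b y L} \<le> 2 / (real L + 2)"
proof -
  obtain p q where "p < L" "\<not> x ! p" "q < L" "x ! q"
    using not_const by (auto simp: const_prefix_def)
  define ones where "ones = {k. k < L \<and> x ! k}"
  define zeros where "zeros = {k. k < L \<and> \<not> x ! k}"
  define P where "P = measure (V x) {y. const_prefix b y L}"
  have "ones \<union> zeros = {..<L}" "ones \<inter> zeros = {}"
    unfolding ones_def zeros_def by auto
  then have "card ones + card zeros = L"
    by (metis card_Un_disjoint card_lessThan finite_Un finite_lessThan)
  then have "(real L + 2) * P = real (card ones + 1) * P + real (card zeros + 1) * P"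
    by (auto simp: algebra_simps)
  moreover have "real (card ones + 1) * P \<le> 1"
    unfolding P_def ones_def using \<open>p < L\<close> \<open>\<not> x ! p\<close>
    by (intro card_mult_measure_const_prefix_le_1[OF V x \<open>L \<le> n\<close>]) auto
  moreover have "real (card zeros + 1) * P \<le> 1"
    unfolding P_def zeros_def using \<open>q < L\<close> \<open>x ! q\<close>
    by (intro card_mult_measure_const_prefix_le_1[OF V x \<open>L \<le> n\<close>]) auto
  ultimately have "(real L + 2) * P \<le> 2"
    by linarith
  then show ?thesis
    unfolding P_def by (simp add: field_simps)
qed

section \<open>Histories and their symmetries\<close>

lemma unary_unbiased_algD:
  "unary_unbiased_alg n A \<Longrightarrow> hs \<noteq> [] \<Longrightarrow> (V, i) \<in> set_pmf (A hs) \<Longrightarrow>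
    i < length hs \<and> unary_unbiased_op n V"
  unfolding unary_unbiased_alg_def by fastforce

lemma length_history: "xs \<in> set_pmf (history n f A t) \<Longrightarrow> length xs = Suc t"
  by (induction t arbitrary: xs) auto

lemma set_history_subset_bitstrings:
  assumes alg: "unary_unbiased_alg n A" and xs: "xs \<in> set_pmf (history n f A t)"
  shows "set xs \<subseteq> bitstrings n"
  using xs
proof (induction t arbitrary: xs)
  case 0
  then show ?case
    using finite_bitstrings bitstrings_nonempty by auto
next
  case (Suc t)
  then obtain zs V i y where zs: "zs \<in> set_pmf (history n f A t)"
    and Vi: "(V, i) \<in> set_pmf (A (map f zs))" and y: "y \<in> set_pmf (V (zs ! i))"
    and xs: "xs = zs @ [y]"
    by auto
  have "map f zs \<noteq> []"
    using length_history[OF zs] by auto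
  then have "i < length zs" "unary_unbiased_op n V"
    using unary_unbiased_algD[OF alg _ Vi] by auto
  then have "y \<in> bitstrings n"
    using y Suc.IH[OF zs] set_pmf_unary_unbiased_op by (meson nth_mem subsetD)
  then show ?case
    using xs Suc.IH[OF zs] by auto
qed

lemma integral_if_eq_pmf: "(\<integral>x. (if x = a then c else 0) \<partial>measure_pmf M) = pmf M a * (c :: real)"
proof -
  have "(\<integral>x. (if x = a then c else 0) \<partial>measure_pmf M) = (\<integral>x. indicator {a} x * c \<partial>measure_pmf M)"
    by (intro Bochner_Integration.integral_cong) (auto split: split_indicator)
  then show ?thesis
    by (simp add: measure_pmf_single)
qed

lemma pmf_history_snoc:
  assumes "length zs = Suc t"
  shows "pmf (history n f A (Suc t)) (zs @ [y]) =
    pmf (history n f A t) zs * (\<integral>(V, i). pmf (V (zs ! i)) y \<partial>measure_pmf (A (map f zs)))"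
proof -
  define c where "c = (\<integral>(V, i). pmf (V (zs ! i)) y \<partial>measure_pmf (A (map f zs)))"
  have step: "pmf (A (map f xs) \<bind> (\<lambda>(V, i). map_pmf (\<lambda>y. xs @ [y]) (V (xs ! i)))) (zs @ [y])
      = (if xs = zs then c else 0)" if "length xs = Suc t" for xs
  proof -
    have "pmf (map_pmf (\<lambda>y. xs @ [y]) D) (zs @ [y]) = (if xs = zs then pmf D y else 0)" for D
      using that assms pmf_map_inj'[of "\<lambda>y. zs @ [y]" D y]
      by (auto intro: injI simp: pmf_eq_0_set_pmf)
    then show ?thesis
      by (simp add: pmf_bind c_def case_prod_unfold)
  qed
  have "pmf (history n f A (Suc t)) (zs @ [y]) =
     (\<integral>xs. pmf (A (map f xs) \<bind> (\<lambda>(V, i). map_pmf (\<lambda>y. xs @ [y]) (V (xs ! i)))) (zs @ [y])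
        \<partial>measure_pmf (history n f A t))"
    by (simp add: pmf_bind)
  also have "\<dots> = (\<integral>xs. (if xs = zs then c else 0) \<partial>measure_pmf (history n f A t))"
    by (intro integral_cong_AE AE_pmfI; simp add: step length_history)
  finally show ?thesis
    by (simp add: integral_if_eq_pmf c_def)
qed

definition mask_from :: "nat \<Rightarrow> nat \<Rightarrow> bool list \<Rightarrow> bool list" where
  "mask_from n L w = map (\<lambda>i. w ! i \<and> L \<le> i) [0..<n]"

lemma mask_from_in_bitstrings: "mask_from n L w \<in> bitstrings n"
  by (simp add: mask_from_def bitstrings_def)

lemma take_xor_mask_from:
  assumes "x \<in> bitstrings n" "k \<le> L"
  shows "take k (xor_bits x (mask_from n L w)) = take k x"
  using assms by (intro nth_equalityI) (auto simp: bitstrings_def mask_from_def)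

lemma xor_mask_from_invariants:
  assumes x: "x \<in> bitstrings n" and L: "2 * const_blocks n x + 2 \<le> L"
  shows "const_blocks n (xor_bits x (mask_from n L w)) = const_blocks n x"
    "dlb n (xor_bits x (mask_from n L w)) = dlb n x"
  using x take_xor_mask_from[OF x L] mask_from_in_bitstrings[of n L w]
  by (auto simp: bitstrings_def intro: const_blocks_eq_if_take_eq dlb_eq_if_take_eq)

lemma xor_mask_from_history_invariants:
  assumes xs: "set xs \<subseteq> bitstrings n" and L: "2 * max_const_blocks n xs + 2 \<le> L"
  shows "max_const_blocks n (map (\<lambda>x. xor_bits x (mask_from n L w)) xs) = max_const_blocks n xs"
    "map (dlb n) (map (\<lambda>x. xor_bits x (mask_from n L w)) xs) = map (dlb n) xs"
proof -
  have "2 * const_blocks n x + 2 \<le> L" if "x \<in> set xs" for x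
    using L const_blocks_le_max_const_blocks[OF that, of n] by linarith
  then show "max_const_blocks n (map (\<lambda>x. xor_bits x (mask_from n L w)) xs) = max_const_blocks n xs"
    "map (dlb n) (map (\<lambda>x. xor_bits x (mask_from n L w)) xs) = map (dlb n) xs"
    using xs xor_mask_from_invariants by (auto intro!: max_const_blocks_map)
qed

lemma pmf_history_xor_mask_from:
  assumes alg: "unary_unbiased_alg n A"
  shows "length xs = Suc t \<Longrightarrow> set xs \<subseteq> bitstrings n \<Longrightarrow> 2 * max_const_blocks n xs + 2 \<le> L \<Longrightarrow>
    pmf (history n (dlb n) A t) (map (\<lambda>x. xor_bits x (mask_from n L w)) xs) =
      pmf (history n (dlb n) A t) xs"
proof (induction t arbitrary: xs)
  case 0
  then obtain x where "xs = [x]" "x \<in> bitstrings n"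
    by (metis One_nat_def length_0_conv length_Suc_conv list.set_intros(1) subsetD)
  moreover have "inj (\<lambda>x :: bool list. [x])"
    by (rule injI) simp
  then have "pmf (map_pmf (\<lambda>x. [x]) D) [a] = pmf D a" for D :: "bool list pmf" and a
    by (rule pmf_map_inj')
  ultimately show ?case
    using mask_from_in_bitstrings xor_bits_in_bitstrings finite_bitstrings bitstrings_nonempty
    by (simp add: indicator_def)
next
  case (Suc t)
  define u where "u = mask_from n L w"
  obtain zs y where xs: "xs = zs @ [y]"
    using Suc.prems(1) by (metis length_Suc_conv_rev)
  have "length zs = Suc t" "set zs \<subseteq> bitstrings n" "y \<in> bitstrings n"
    using Suc.prems(1,2) xs by auto
  moreover have "2 * max_const_blocks n zs + 2 \<le> L"
    using Suc.prems(3) xs by (simp add: max_const_blocks_snoc)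
  ultimately have IH:
      "pmf (history n (dlb n) A t) (map (\<lambda>x. xor_bits x u) zs) = pmf (history n (dlb n) A t) zs"
    and same_dlb: "map (dlb n) (map (\<lambda>x. xor_bits x u) zs) = map (dlb n) zs"
    using Suc.IH xor_mask_from_history_invariants unfolding u_def by blast+
  have step: "pmf (V (map (\<lambda>x. xor_bits x u) zs ! i)) (xor_bits y u) = pmf (V (zs ! i)) y"
    if "(V, i) \<in> set_pmf (A (map (dlb n) zs))" for V i
  proof -
    have "map (dlb n) zs \<noteq> []"
      using \<open>length zs = Suc t\<close> by auto
    then have "i < length zs" "unary_unbiased_op n V"
      using unary_unbiased_algD[OF alg _ that] by auto
    moreover have "zs ! i \<in> bitstrings n"
      using \<open>i < length zs\<close> \<open>set zs \<subseteq> bitstrings n\<close> by auto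
    ultimately show ?thesis
      using \<open>y \<in> bitstrings n\<close> mask_from_in_bitstrings
        pmf_unary_unbiased_op_xor[of n V "zs ! i" y u]
      unfolding u_def by simp
  qed
  have "(\<integral>(V, i). pmf (V (map (\<lambda>x. xor_bits x u) zs ! i)) (xor_bits y u) \<partial>A (map (dlb n) zs))
      = (\<integral>(V, i). pmf (V (zs ! i)) y \<partial>A (map (dlb n) zs))"
    by (intro integral_cong_AE AE_pmfI; auto simp: step)
  then have "pmf (history n (dlb n) A (Suc t)) (map (\<lambda>x. xor_bits x u) zs @ [xor_bits y u]) =
      pmf (history n (dlb n) A t) zs * (\<integral>(V, i). pmf (V (zs ! i)) y \<partial>A (map (dlb n) zs))"
    using \<open>length zs = Suc t\<close> by (simp only: pmf_history_snoc length_map IH same_dlb)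
  also have "\<dots> = pmf (history n (dlb n) A (Suc t)) xs"
    unfolding xs using \<open>length zs = Suc t\<close> by (simp only: pmf_history_snoc)
  finally show ?case
    by (simp add: xs u_def)
qed

definition mask_history :: "nat \<Rightarrow> bool list \<Rightarrow> bool list list \<Rightarrow> bool list list" where
  "mask_history n w xs = map (\<lambda>x. xor_bits x (mask_from n (2 * max_const_blocks n xs + 2) w)) xs"

lemma mask_history_invariants:
  assumes "set xs \<subseteq> bitstrings n"
  shows "max_const_blocks n (mask_history n w xs) = max_const_blocks n xs"
    "map (dlb n) (mask_history n w xs) = map (dlb n) xs"
  using xor_mask_from_history_invariants[OF assms order_refl] unfolding mask_history_def by simp_all

lemma mask_history_involution:
  assumes xs: "set xs \<subseteq> bitstrings n"
  shows "set (mask_history n w xs) \<subseteq> bitstrings n" "mask_history n w (mask_history n w xs) = xs"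
proof -
  define m where "m = mask_from n (2 * max_const_blocks n xs + 2) w"
  have m: "m \<in> bitstrings n"
    unfolding m_def by (rule mask_from_in_bitstrings)
  have "mask_history n w xs = map (\<lambda>x. xor_bits x m) xs"
    by (simp add: mask_history_def m_def)
  then show "set (mask_history n w xs) \<subseteq> bitstrings n"
    using xs m xor_bits_in_bitstrings by auto
  have "mask_history n w (mask_history n w xs) = map (\<lambda>x. xor_bits x m) (mask_history n w xs)"
    unfolding mask_history_def[of n w "mask_history n w xs"] mask_history_invariants(1)[OF xs] m_def
    ..
  also have "\<dots> = xs"
    using xs m \<open>mask_history n w xs = map (\<lambda>x. xor_bits x m) xs\<close>
    by (auto simp: xor_bits_cancel intro!: map_idI)
  finally show "mask_history n w (mask_history n w xs) = xs" .
qed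

lemma map_pmf_mask_history_history:
  assumes alg: "unary_unbiased_alg n A"
  shows "map_pmf (mask_history n w) (history n (dlb n) A t) = history n (dlb n) A t"
proof -
  have supp: "set_pmf (history n (dlb n) A t) \<subseteq> {xs. length xs = Suc t \<and> set xs \<subseteq> bitstrings n}"
    using length_history set_history_subset_bitstrings[OF alg] by blast
  show ?thesis
  proof (rule map_pmf_involution_eqI[OF supp supp])
    fix xs assume xs: "xs \<in> {xs. length xs = Suc t \<and> set xs \<subseteq> bitstrings n}"
    then show "mask_history n w xs \<in> {xs. length xs = Suc t \<and> set xs \<subseteq> bitstrings n}"
      "mask_history n w (mask_history n w xs) = xs"
      using mask_history_involution[of xs n w] by (auto simp: mask_history_def)
    show "pmf (history n (dlb n) A t) xs = pmf (history n (dlb n) A t) (mask_history n w xs)"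
      using xs pmf_history_xor_mask_from[OF alg] unfolding mask_history_def by simp
  qed
qed

section \<open>Drift of the potential\<close>

lemma card_const_prefix_xor_mask_from:
  assumes y: "y \<in> bitstrings n" and "L \<le> s" "s \<le> n"
  shows "card {w \<in> bitstrings n. const_prefix b (xor_bits y (mask_from n L w)) s} =
    (if const_prefix b y L then 2 ^ (n - (s - L)) else 0)"
proof -
  have "const_prefix b (xor_bits y (mask_from n L w)) s \<longleftrightarrow>
      const_prefix b y L \<and> (\<forall>k\<in>{L..<s}. w ! k = (y ! k \<noteq> b))" for w
    using y assms(2,3) unfolding const_prefix_def
    by (auto simp: bitstrings_def mask_from_def) (metis not_le less_le_trans)+
  then have "{w \<in> bitstrings n. const_prefix b (xor_bits y (mask_from n L w)) s} =
      (if const_prefix b y L then {w \<in> bitstrings n. \<forall>k\<in>{L..<s}. w ! k = (y ! k \<noteq> b)} else {})"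
    by auto
  moreover have "{L..<s} \<subseteq> {..<n}"
    using assms(3) by auto
  ultimately show ?thesis
    using card_bitstrings_fixing[of "{L..<s}" n "\<lambda>k. y ! k \<noteq> b"] by simp
qed

lemma square_le_sum_double:
  fixes M k :: nat
  assumes "M \<le> k"
  shows "k ^ 2 \<le> M ^ 2 + (\<Sum>i\<in>{M<..k}. 2 * i)"
  using assms
proof (induction k rule: dec_induct)
  case (step k)
  have "{M<..Suc k} = insert (Suc k) {M<..k}"
    using step.hyps by auto
  then show ?case
    using step.IH by (simp add: power2_eq_square)
qed simp

lemma max_square_le_sum:
  fixes M \<phi> h :: nat
  assumes "\<phi> \<le> h"
  shows "real ((max M \<phi>) ^ 2) \<le> real (M ^ 2) + (\<Sum>i\<in>{M<..h}. if i \<le> \<phi> then 2 * real i else 0)"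
proof (cases "\<phi> \<le> M")
  case True
  then show ?thesis
    by (simp add: max_def sum_nonneg)
next
  case False
  have "{i \<in> {M<..h}. i \<le> \<phi>} = {M<..\<phi>}"
    using assms by auto
  then have "(\<Sum>i\<in>{M<..h}. if i \<le> \<phi> then 2 * real i else 0) = real (\<Sum>i\<in>{M<..\<phi>}. 2 * i)"
    by (simp add: sum.inter_filter[symmetric])
  moreover have "real (\<phi> ^ 2) \<le> real (M ^ 2) + real (\<Sum>i\<in>{M<..\<phi>}. 2 * i)"
    using False square_le_sum_double[of M \<phi>] by (metis of_nat_add of_nat_le_iff nat_le_linear)
  ultimately show ?thesis
    using False by (simp add: max_def)
qed

lemma geometric_tail_le: "(\<Sum>i\<in>{M<..h}. 2 * real i / 4 ^ (i - Suc M)) \<le> 4 * (real M + 1)"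
proof -
  have "(\<Sum>i\<in>{M<..h}. 2 * real i / 4 ^ (i - Suc M)) = (\<Sum>j<h - M. 2 * real (j + Suc M) / 4 ^ j)"
    by (rule sum.reindex_bij_witness[of _ "\<lambda>j. j + Suc M" "\<lambda>i. i - Suc M"]) auto
  also have "\<dots> \<le> (\<Sum>j<h - M. 2 * (real M + 1) * (1 / 2) ^ j)"
  proof (rule sum_mono)
    fix j
    have "real (Suc j) \<le> real (2 ^ j)"
      by (intro of_nat_mono Suc_leI less_exp)
    then have "real j + 1 \<le> 2 ^ j"
      by simp
    moreover have "real M * 1 \<le> real M * 2 ^ j"
      by (intro mult_left_mono one_le_power) auto
    ultimately have "real (j + Suc M) \<le> (real M + 1) * 2 ^ j"
      by (simp add: algebra_simps)
    then have "2 * real (j + Suc M) / 4 ^ j \<le> 2 * ((real M + 1) * 2 ^ j) / 4 ^ j"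
      by (intro divide_right_mono) auto
    also have "\<dots> = 2 * (real M + 1) * (1 / 2) ^ j"
      by (simp add: power_one_over field_simps flip: power_mult_distrib)
    finally show "2 * real (j + Suc M) / 4 ^ j \<le> 2 * (real M + 1) * (1 / 2) ^ j" .
  qed
  also have "\<dots> = 2 * (real M + 1) * (2 - 2 * (1 / 2) ^ (h - M))"
    by (simp add: sum_distrib_left[symmetric] sum_gp_strict)
  also have "\<dots> \<le> 4 * (real M + 1)"
    by (simp add: algebra_simps)
  finally show ?thesis .
qed

lemma pow2_diff_le_divide_pow4:
  assumes "2 * i \<le> n" "L \<le> 2 * M + 2"
  shows "(2 :: real) ^ (n - (2 * i - L)) \<le> 2 ^ n / 4 ^ (i - Suc M)"
proof -
  have "(2 :: real) ^ (n - (2 * i - L)) * 4 ^ (i - Suc M) = 2 ^ (n - (2 * i - L) + 2 * (i - Suc M))"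
    by (simp add: power_add power_mult)
  also have "\<dots> \<le> 2 ^ n"
    using assms by (intro power_increasing) auto
  finally show ?thesis
    by (simp add: field_simps)
qed

lemma card_le_const_blocks_xor_mask_from:
  assumes y: "y \<in> bitstrings n" and "L \<le> 2 * i" "2 * i \<le> n"
  shows "real (card {w \<in> bitstrings n. i \<le> const_blocks n (xor_bits y (mask_from n L w))}) \<le>
    (of_bool (const_prefix True y L) + of_bool (const_prefix False y L)) * 2 ^ (n - (2 * i - L))"
proof -
  define W
    where "W b = {w \<in> bitstrings n. const_prefix b (xor_bits y (mask_from n L w)) (2 * i)}" for b
  have "{w \<in> bitstrings n. i \<le> const_blocks n (xor_bits y (mask_from n L w))} \<subseteq> W True \<union> W False"
    by (auto simp: W_def le_const_blocks_iff ex_bool_eq)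
  then have "card {w \<in> bitstrings n. i \<le> const_blocks n (xor_bits y (mask_from n L w))} \<le>
      card (W True) + card (W False)"
    using finite_bitstrings by (intro order_trans[OF card_mono card_Un_le]) (auto simp: W_def)
  also have "\<dots> = (if const_prefix True y L then 2 ^ (n - (2 * i - L)) else 0) +
      (if const_prefix False y L then 2 ^ (n - (2 * i - L)) else 0)"
    unfolding W_def using card_const_prefix_xor_mask_from[OF y assms(2,3)] by simp
  finally have "real (card {w \<in> bitstrings n. i \<le> const_blocks n (xor_bits y (mask_from n L w))}) \<le>
      real (if const_prefix True y L then 2 ^ (n - (2 * i - L)) else 0) +
      real (if const_prefix False y L then 2 ^ (n - (2 * i - L)) else 0)"
    by (simp only: of_nat_add[symmetric] of_nat_le_iff)
  also have "\<dots> =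
      (of_bool (const_prefix True y L) + of_bool (const_prefix False y L)) * 2 ^ (n - (2 * i - L))"
    by (simp add: algebra_simps)
  finally show ?thesis .
qed

lemma sum_max_square_const_blocks_xor_mask_from:
  assumes y: "y \<in> bitstrings n" and L: "L \<le> 2 * M + 2"
  shows "(\<Sum>w\<in>bitstrings n. real ((max M (const_blocks n (xor_bits y (mask_from n L w)))) ^ 2)) \<le>
    2 ^ n * (real (M ^ 2) + 4 * (real M + 1) *
      (of_bool (const_prefix True y L) + of_bool (const_prefix False y L)))"
proof -
  define B where "B = bitstrings n"
  define \<phi> where "\<phi> w = const_blocks n (xor_bits y (mask_from n L w))" for w
  define c :: real where "c = of_bool (const_prefix True y L) + of_bool (const_prefix False y L)"
  have "finite B" "real (card B) = 2 ^ n"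
    unfolding B_def by (simp_all add: finite_bitstrings card_bitstrings)
  have count: "real (card {w \<in> B. i \<le> \<phi> w}) \<le> c * (2 ^ n / 4 ^ (i - Suc M))"
    if "i \<in> {M<..n div 2}" for i
  proof -
    have "L \<le> 2 * i" "2 * i \<le> n"
      using that L by auto
    then have "real (card {w \<in> B. i \<le> \<phi> w}) \<le> c * 2 ^ (n - (2 * i - L))"
      unfolding B_def \<phi>_def c_def by (rule card_le_const_blocks_xor_mask_from[OF y])
    also have "\<dots> \<le> c * (2 ^ n / 4 ^ (i - Suc M))"
      unfolding c_def using pow2_diff_le_divide_pow4[OF \<open>2 * i \<le> n\<close> L]
      by (intro mult_left_mono) auto
    finally show ?thesis .
  qed
  have "(\<Sum>w\<in>B. real ((max M (\<phi> w)) ^ 2)) \<le>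
      (\<Sum>w\<in>B. real (M ^ 2) + (\<Sum>i\<in>{M<..n div 2}. if i \<le> \<phi> w then 2 * real i else 0))"
    unfolding \<phi>_def by (intro sum_mono max_square_le_sum const_blocks_le)
  also have "\<dots> = 2 ^ n * real (M ^ 2) +
      (\<Sum>i\<in>{M<..n div 2}. \<Sum>w\<in>B. if i \<le> \<phi> w then 2 * real i else 0)"
    using \<open>real (card B) = 2 ^ n\<close> by (simp add: sum.distrib sum.swap[of _ B])
  also have "\<dots> = 2 ^ n * real (M ^ 2) +
      (\<Sum>i\<in>{M<..n div 2}. 2 * real i * real (card {w \<in> B. i \<le> \<phi> w}))"
    using \<open>finite B\<close> by (simp add: sum.inter_filter[symmetric] mult.commute)
  also have "\<dots> \<le> 2 ^ n * real (M ^ 2) +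
      (\<Sum>i\<in>{M<..n div 2}. 2 * real i * (c * (2 ^ n / 4 ^ (i - Suc M))))"
    using count by (intro add_left_mono sum_mono mult_left_mono) auto
  also have "\<dots> = 2 ^ n * (real (M ^ 2) + c * (\<Sum>i\<in>{M<..n div 2}. 2 * real i / 4 ^ (i - Suc M)))"
    by (simp add: sum_distrib_left algebra_simps)
  also have "\<dots> \<le> 2 ^ n * (real (M ^ 2) + c * (4 * (real M + 1)))"
    unfolding c_def using geometric_tail_le by (intro mult_left_mono add_left_mono) auto
  finally show ?thesis
    unfolding B_def \<phi>_def c_def by (simp add: algebra_simps)
qed

lemma nn_integral_average_max_square_le:
  assumes V: "unary_unbiased_op n V" and x: "x \<in> bitstrings n"
    and M: "const_blocks n x \<le> M" "M \<le> n div 2"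
  shows "(\<integral>\<^sup>+ y. ennreal ((\<Sum>w\<in>bitstrings n.
      real ((max M (const_blocks n (xor_bits y (mask_from n (2 * M + 2) w)))) ^ 2)) / 2 ^ n) \<partial>V x)
    \<le> ennreal (real (M ^ 2) + 8)"
proof (cases "M = n div 2")
  case True
  have "max M (const_blocks n z) = M" for z
    using True const_blocks_le[of n z] by simp
  then show ?thesis
    by (simp add: card_bitstrings measure_pmf.emeasure_space_1 ennreal_leI)
next
  case False
  define L where "L = 2 * M + 2"
  define c where "c = 4 * (real M + 1)"
  define S where "S b = {y. const_prefix b y L}" for b
  have "L \<le> n"
    using False M unfolding L_def by linarith
  have "\<not> const_prefix b x L" for b
    using M False le_const_blocks_iff[of "M + 1" n x] unfolding L_def by auto
  then have P: "measure (V x) (S b) \<le> 2 / (real L + 2)" for b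
    unfolding S_def using measure_const_prefix_le[OF V x \<open>L \<le> n\<close>] by blast
  define F where
    "F y = (\<Sum>w\<in>bitstrings n.
      real ((max M (const_blocks n (xor_bits y (mask_from n L w)))) ^ 2)) / 2 ^ n" for y
  have pointwise:
    "ennreal (F y) \<le>
      ennreal (real (M ^ 2)) + ennreal c * indicator (S True) y + ennreal c * indicator (S False) y"
    if "y \<in> set_pmf (V x)" for y
  proof -
    have "y \<in> bitstrings n"
      using that set_pmf_unary_unbiased_op[OF V x] by blast
    from sum_max_square_const_blocks_xor_mask_from[OF this, of L M]
    have "F y \<le> real (M ^ 2) + c * indicator (S True) y + c * indicator (S False) y"
      unfolding F_def L_def c_def S_def by (simp add: field_simps indicator_def)
    then show ?thesis
      unfolding c_def
      by (auto simp: ennreal_plus[symmetric] ennreal_mult[symmetric] split: split_indicator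
          simp del: ennreal_plus intro!: ennreal_leI)
  qed
  have "(\<integral>\<^sup>+ y. ennreal (F y) \<partial>V x) \<le>
      (\<integral>\<^sup>+ y. ennreal (real (M ^ 2)) + ennreal c * indicator (S True) y
        + ennreal c * indicator (S False) y \<partial>V x)"
    by (intro nn_integral_mono_AE AE_pmfI pointwise)
  also have "\<dots> = ennreal (real (M ^ 2) + c * measure (V x) (S True) + c * measure (V x) (S False))"
    unfolding c_def
    by (simp add: nn_integral_add nn_integral_cmult_indicator measure_pmf.emeasure_space_1
        measure_pmf.emeasure_eq_measure ennreal_plus[symmetric] ennreal_mult[symmetric]
        del: ennreal_plus)
  also have "\<dots> \<le> ennreal (real (M ^ 2) + 8)"
  proof (intro ennreal_leI)
    have "measure (V x) (S True) + measure (V x) (S False) \<le> 2 / (real L + 2) + 2 / (real L + 2)"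
      by (rule add_mono[OF P P])
    then have "c * (measure (V x) (S True) + measure (V x) (S False)) \<le> c * (4 / (real L + 2))"
      unfolding c_def by (intro mult_left_mono) auto
    then have "c * measure (V x) (S True) + c * measure (V x) (S False) \<le> c * (4 / (real L + 2))"
      by (simp add: distrib_left)
    also have "\<dots> \<le> 8"
      unfolding c_def L_def by (simp add: field_simps)
    finally show "real (M ^ 2) + c * measure (V x) (S True) + c * measure (V x) (S False) \<le>
        real (M ^ 2) + 8"
      by simp
  qed
  finally show ?thesis
    unfolding F_def L_def .
qed

definition expected_potential :: "nat \<Rightarrow> ub_algorithm \<Rightarrow> nat \<Rightarrow> ennreal" where
  "expected_potential n A t =
    (\<integral>\<^sup>+ xs. ennreal (real ((max_const_blocks n xs) ^ 2)) \<partial>history n (dlb n) A t)"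

definition next_potential :: "nat \<Rightarrow> ub_algorithm \<Rightarrow> bool list list \<Rightarrow> ennreal" where
  "next_potential n A zs = (\<integral>\<^sup>+ (V, i). \<integral>\<^sup>+ y. ennreal (real ((max_const_blocks n (zs @ [y])) ^ 2))
      \<partial>V (zs ! i) \<partial>A (map (dlb n) zs))"

lemma expected_potential_Suc:
  "expected_potential n A (Suc t) = (\<integral>\<^sup>+ zs. next_potential n A zs \<partial>history n (dlb n) A t)"
  unfolding expected_potential_def next_potential_def by (simp add: case_prod_beta)

lemma next_potential_mask_history:
  assumes alg: "unary_unbiased_alg n A" and zs: "zs \<in> set_pmf (history n (dlb n) A t)"
  shows "next_potential n A (mask_history n w zs) = (\<integral>\<^sup>+ (V, i). \<integral>\<^sup>+ y.
      ennreal (real ((max (max_const_blocks n zs)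
        (const_blocks n (xor_bits y (mask_from n (2 * max_const_blocks n zs + 2) w)))) ^ 2))
      \<partial>V (zs ! i) \<partial>A (map (dlb n) zs))"
proof -
  define u where "u = mask_from n (2 * max_const_blocks n zs + 2) w"
  have zs_bits: "set zs \<subseteq> bitstrings n"
    using set_history_subset_bitstrings[OF alg zs] .
  have "map (dlb n) zs \<noteq> []"
    using length_history[OF zs] by auto
  have "(\<integral>\<^sup>+ y. ennreal (real ((max_const_blocks n (mask_history n w zs @ [y])) ^ 2))
        \<partial>V (mask_history n w zs ! i))
      = (\<integral>\<^sup>+ y. ennreal (real ((max (max_const_blocks n zs) (const_blocks n (xor_bits y u))) ^ 2))
        \<partial>V (zs ! i))"
    if "(V, i) \<in> set_pmf (A (map (dlb n) zs))" for V i
  proof -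
    have "i < length zs" "unary_unbiased_op n V"
      using unary_unbiased_algD[OF alg \<open>map (dlb n) zs \<noteq> []\<close> that] by auto
    moreover have "zs ! i \<in> bitstrings n"
      using \<open>i < length zs\<close> zs_bits by auto
    ultimately have "V (mask_history n w zs ! i) = map_pmf (\<lambda>y. xor_bits y u) (V (zs ! i))"
      using unary_unbiased_op_xor mask_from_in_bitstrings by (simp add: mask_history_def u_def)
    then show ?thesis
      by (simp add: max_const_blocks_snoc mask_history_invariants(1)[OF zs_bits])
  qed
  then show ?thesis
    unfolding next_potential_def mask_history_invariants(2)[OF zs_bits] u_def
    by (intro nn_integral_cong_AE AE_pmfI) auto
qed

lemma average_next_potential_mask_history_le:
  assumes alg: "unary_unbiased_alg n A" and zs: "zs \<in> set_pmf (history n (dlb n) A t)"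
  shows "(\<Sum>w\<in>bitstrings n. next_potential n A (mask_history n w zs)) / 2 ^ n
    \<le> ennreal (real ((max_const_blocks n zs) ^ 2) + 8)"
proof -
  define M where "M = max_const_blocks n zs"
  define R where
    "R w y = real ((max M (const_blocks n (xor_bits y (mask_from n (2 * M + 2) w)))) ^ 2)" for w y
  have "map (dlb n) zs \<noteq> []"
    using length_history[OF zs] by auto
  have "(\<Sum>w\<in>bitstrings n. next_potential n A (mask_history n w zs)) / 2 ^ n =
      (\<integral>\<^sup>+ (V, i). \<integral>\<^sup>+ y. (\<Sum>w\<in>bitstrings n. ennreal (R w y)) / 2 ^ n
        \<partial>V (zs ! i) \<partial>A (map (dlb n) zs))"
    using next_potential_mask_history[OF alg zs]
    by (simp add: R_def M_def case_prod_unfold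
        nn_integral_sum[symmetric] nn_integral_divide[symmetric])
  also have "\<dots> \<le> (\<integral>\<^sup>+ _. ennreal (real (M ^ 2) + 8) \<partial>A (map (dlb n) zs))"
  proof -
    have "(\<integral>\<^sup>+ y. (\<Sum>w\<in>bitstrings n. ennreal (R w y)) / 2 ^ n \<partial>V (zs ! i)) \<le>
        ennreal (real (M ^ 2) + 8)"
      if "(V, i) \<in> set_pmf (A (map (dlb n) zs))" for V i
    proof -
      have "i < length zs" "unary_unbiased_op n V"
        using unary_unbiased_algD[OF alg \<open>map (dlb n) zs \<noteq> []\<close> that] by auto
      then have "zs ! i \<in> bitstrings n" "const_blocks n (zs ! i) \<le> M"
        using set_history_subset_bitstrings[OF alg zs] const_blocks_le_max_const_blocks
        unfolding M_def by auto
      moreover have "(\<Sum>w\<in>bitstrings n. ennreal (R w y)) / 2 ^ n =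
          ennreal ((\<Sum>w\<in>bitstrings n. R w y) / 2 ^ n)" for y
        using ennreal_power[of 2 n]
        by (simp add: R_def sum_ennreal divide_ennreal[symmetric] sum_nonneg)
      ultimately show ?thesis
        using nn_integral_average_max_square_le[OF \<open>unary_unbiased_op n V\<close>] max_const_blocks_le
        unfolding R_def M_def by simp
    qed
    then show ?thesis
      by (intro nn_integral_mono_AE AE_pmfI) auto
  qed
  also have "\<dots> = ennreal (real (M ^ 2) + 8)"
    by (simp add: measure_pmf.emeasure_space_1)
  finally show ?thesis
    unfolding M_def .
qed

lemma nn_integral_eq_average_over_invariances:
  fixes f :: "'a \<Rightarrow> ennreal"
  assumes "finite W" "W \<noteq> {}" and invariant: "\<And>w. w \<in> W \<Longrightarrow> map_pmf (g w) M = M"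
  shows "(\<integral>\<^sup>+ x. f x \<partial>M) = (\<integral>\<^sup>+ x. (\<Sum>w\<in>W. f (g w x)) / of_nat (card W) \<partial>M)"
proof -
  have "(\<integral>\<^sup>+ x. f (g w x) \<partial>M) = (\<integral>\<^sup>+ x. f x \<partial>M)" if "w \<in> W" for w
    using invariant[OF that] by (metis nn_integral_map_pmf)
  then have "(\<integral>\<^sup>+ x. (\<Sum>w\<in>W. f (g w x)) / of_nat (card W) \<partial>M) =
      of_nat (card W) * (\<integral>\<^sup>+ x. f x \<partial>M) / of_nat (card W)"
    by (simp add: nn_integral_divide nn_integral_sum)
  also have "\<dots> = (\<integral>\<^sup>+ x. f x \<partial>M)"
    using assms(1,2) by (subst mult.commute, intro ennreal_mult_divide_eq) auto
  finally show ?thesis ..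
qed

lemma expected_potential_Suc_le:
  assumes alg: "unary_unbiased_alg n A"
  shows "expected_potential n A (Suc t) \<le> expected_potential n A t + 8"
proof -
  have "expected_potential n A (Suc t) =
      (\<integral>\<^sup>+ zs. (\<Sum>w\<in>bitstrings n. next_potential n A (mask_history n w zs)) / 2 ^ n
        \<partial>history n (dlb n) A t)"
    unfolding expected_potential_Suc
    using nn_integral_eq_average_over_invariances[OF finite_bitstrings bitstrings_nonempty
        map_pmf_mask_history_history[OF alg]]
    by (simp add: card_bitstrings)
  also have "\<dots> \<le> (\<integral>\<^sup>+ zs. ennreal (real ((max_const_blocks n zs) ^ 2) + 8) \<partial>history n (dlb n) A t)"
    by (intro nn_integral_mono_AE AE_pmfI average_next_potential_mask_history_le[OF alg])
  also have "\<dots> = expected_potential n A t + 8"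
    unfolding expected_potential_def by (simp add: nn_integral_add measure_pmf.emeasure_space_1)
  finally show ?thesis .
qed

lemma expected_potential_0_le: "expected_potential n A 0 \<le> 8"
proof -
  define y where "y = replicate n False"
  have "y \<in> bitstrings n"
    by (simp add: y_def bitstrings_def)
  moreover have "xor_bits y (mask_from n 0 w) = w" if "w \<in> bitstrings n" for w
    using that by (intro nth_equalityI) (auto simp: y_def bitstrings_def mask_from_def)
  moreover have "const_prefix b y 0" for b
    by (simp add: const_prefix_def)
  ultimately have "(\<Sum>w\<in>bitstrings n. real ((const_blocks n w) ^ 2)) \<le> 2 ^ n * 8"
    using sum_max_square_const_blocks_xor_mask_from[of y n 0 0] by simp
  then have "(\<Sum>w\<in>bitstrings n. real ((const_blocks n w) ^ 2)) / 2 ^ n \<le> 8"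
    by (simp add: field_simps)
  moreover have
    "expected_potential n A 0 = ennreal ((\<Sum>w\<in>bitstrings n. real ((const_blocks n w) ^ 2)) / 2 ^ n)"
    using ennreal_power[of 2 n]
    by (simp add: expected_potential_def nn_integral_pmf_of_set finite_bitstrings
        bitstrings_nonempty card_bitstrings sum_ennreal divide_ennreal[symmetric] sum_nonneg)
  ultimately show ?thesis
    by (metis ennreal_leI ennreal_numeral)
qed

lemma expected_potential_le:
  "unary_unbiased_alg n A \<Longrightarrow> expected_potential n A t \<le> ennreal (8 * real (Suc t))"
proof (induction t)
  case 0
  then show ?case
    using expected_potential_0_le[of n A] by simp
next
  case (Suc t)
  then have "expected_potential n A (Suc t) \<le> ennreal (8 * real (Suc t)) + 8"
    using expected_potential_Suc_le[of n A t] add_right_mono order_trans by blast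
  also have "\<dots> = ennreal (8 * real (Suc (Suc t)))"
    using ennreal_plus[of "8 * real (Suc t)" 8] by (simp add: algebra_simps)
  finally show ?case .
qed

section \<open>The quadratic lower bound\<close>

lemma dlb_replicate_True: "dlb n (replicate n True) = n"
proof -
  have "2 * l + 1 < n" if "l < n div 2" for l
    using that by linarith
  then show ?thesis
    unfolding dlb_def by simp
qed

lemma const_blocks_optimum:
  assumes opt: "is_optimum n (dlb n) x"
  shows "const_blocks n x = n div 2"
proof -
  have "replicate n True \<in> bitstrings n"
    by (simp add: bitstrings_def)
  then have "n \<le> dlb n x"
    using opt dlb_replicate_True[of n] unfolding is_optimum_def by force
  have "\<forall>l < n div 2. x ! (2 * l) \<and> x ! (2 * l + 1)"
  proof (rule ccontr)
    assume not_all: "\<not> (\<forall>l < n div 2. x ! (2 * l) \<and> x ! (2 * l + 1))"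
    define m where "m = (LEAST l. l < n div 2 \<and> \<not> (x ! (2 * l) \<and> x ! (2 * l + 1)))"
    have "m < n div 2"
      unfolding m_def using not_all by (metis (mono_tags, lifting) LeastI)
    moreover have "dlb n x \<le> 2 * m + 1"
      using not_all unfolding dlb_def Let_def m_def by auto
    ultimately show False
      using \<open>n \<le> dlb n x\<close> by linarith
  qed
  then have "n div 2 \<le> const_blocks n x"
    using const_prefix_True_if_blocks_True le_const_blocks_iff by blast
  then show ?thesis
    using const_blocks_le[of n x] by simp
qed

lemma prob_no_optimum_ge:
  assumes alg: "unary_unbiased_alg n A" and "2 \<le> n"
  shows "1 - 8 * real (Suc t) / real ((n div 2) ^ 2) \<le>
    measure (history n (dlb n) A t) {xs. \<forall>x\<in>set xs. \<not> is_optimum n (dlb n) x}"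
proof -
  define h where "h = n div 2"
  define H where "H = history n (dlb n) A t"
  define S where "S = {xs. h \<le> max_const_blocks n xs}"
  define Q where "Q = {xs. \<forall>x\<in>set xs. \<not> is_optimum n (dlb n) x}"
  have "0 < real (h ^ 2)"
    using assms(2) unfolding h_def by simp
  have "ennreal (real (h ^ 2)) * indicator S xs \<le> ennreal (real ((max_const_blocks n xs) ^ 2))"
    for xs
    by (auto simp: S_def power_mono split: split_indicator intro!: ennreal_leI)
  then have "(\<integral>\<^sup>+ xs. ennreal (real (h ^ 2)) * indicator S xs \<partial>H) \<le> expected_potential n A t"
    unfolding expected_potential_def H_def by (rule nn_integral_mono)
  also have "\<dots> \<le> ennreal (8 * real (Suc t))"
    using expected_potential_le[OF alg] .
  also have "(\<integral>\<^sup>+ xs. ennreal (real (h ^ 2)) * indicator S xs \<partial>H) =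
      ennreal (real (h ^ 2) * measure H S)"
    by (subst nn_integral_cmult_indicator)
      (simp_all add: measure_pmf.emeasure_eq_measure ennreal_mult)
  finally have "real (h ^ 2) * measure H S \<le> 8 * real (Suc t)"
    by (simp only: ennreal_le_iff of_nat_0_le_iff mult_nonneg_nonneg zero_le_numeral)
  then have "measure H S \<le> 8 * real (Suc t) / real (h ^ 2)"
    using \<open>0 < real (h ^ 2)\<close> by (simp add: field_simps)
  moreover have "- Q \<subseteq> S"
  proof
    fix xs assume "xs \<in> - Q"
    then obtain x where "x \<in> set xs" "is_optimum n (dlb n) x"
      by (auto simp: Q_def)
    then show "xs \<in> S"
      using const_blocks_le_max_const_blocks[of x xs n] const_blocks_optimum[of n x]
      unfolding S_def h_def by simp
  qed
  then have "measure H (- Q) \<le> measure H S"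
    by (intro measure_pmf.finite_measure_mono) auto
  moreover have "measure H (- Q) = 1 - measure H Q"
    using measure_pmf.prob_compl[of Q H] by (simp add: Compl_eq_Diff_UNIV)
  ultimately show ?thesis
    unfolding H_def Q_def h_def by simp
qed

lemma expected_runtime_ge:
  assumes alg: "unary_unbiased_alg n A" and "even n" "12 \<le> n"
  shows "ennreal (1 / 256 * real n ^ 2) \<le> expected_runtime n (dlb n) A"
proof -
  define h where "h = n div 2"
  define K where "K = h ^ 2 div 16"
  define p where
    "p t = measure (history n (dlb n) A t) {xs. \<forall>x\<in>set xs. \<not> is_optimum n (dlb n) x}" for t
  have "n = 2 * h" "6 \<le> h"
    using assms(2,3) unfolding h_def by auto
  have "16 * K \<le> h ^ 2" "h ^ 2 < 16 * K + 16"
    unfolding K_def using div_mult_mod_eq[of "h ^ 2" 16] by linarith+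
  have "1 / 2 \<le> p t" if "t < K" for t
  proof -
    have "16 * Suc t \<le> 16 * K"
      using that by simp
    then have "real (16 * Suc t) \<le> real (h ^ 2)"
      using \<open>16 * K \<le> h ^ 2\<close> by (intro of_nat_mono) (rule le_trans)
    then have "8 * real (Suc t) / real (h ^ 2) \<le> 1 / 2"
      using \<open>6 \<le> h\<close> by (simp add: field_simps)
    moreover have "1 - 8 * real (Suc t) / real (h ^ 2) \<le> p t"
      using prob_no_optimum_ge[OF alg, of t] assms(3) unfolding p_def h_def by linarith
    ultimately show ?thesis
      by linarith
  qed
  then have "(\<Sum>t<K. ennreal (1 / 2)) \<le> (\<Sum>t<K. ennreal (p t))"
    by (intro sum_mono ennreal_leI) auto
  then have "ennreal (real K / 2) \<le> (\<Sum>t<K. ennreal (p t))"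
    by (subst (asm) sum_ennreal) auto
  also have "\<dots> \<le> expected_runtime n (dlb n) A"
    unfolding expected_runtime_def p_def by (intro sum_le_suminf) auto
  finally have "ennreal (real K / 2) \<le> expected_runtime n (dlb n) A" .
  moreover have "1 / 256 * real n ^ 2 \<le> real K / 2"
  proof -
    have "real (h ^ 2) \<le> real (16 * K + 16)"
      using \<open>h ^ 2 < 16 * K + 16\<close> by (intro of_nat_mono) linarith
    moreover have "6 * 6 \<le> real h * real h"
      using \<open>6 \<le> h\<close> by (intro mult_mono) auto
    ultimately show ?thesis
      unfolding \<open>n = 2 * h\<close> by (simp add: power2_eq_square)
  qed
  ultimately show ?thesis
    using ennreal_leI order_trans by blast
qed

theorem lemma15:
  shows "\<exists>c::real. c > 0 \<and> (\<exists>N::nat. \<forall>n. n \<ge> N \<and> even n \<longrightarrow>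
           ennreal (c * (real n)^2) \<le> unary_unbiased_bbc n (dlb n))"
proof (intro exI conjI allI impI)
  show "(0 :: real) < 1 / 256"
    by simp
  fix n :: nat
  assume n: "12 \<le> n \<and> even n"
  show "ennreal (1 / 256 * (real n) ^ 2) \<le> unary_unbiased_bbc n (dlb n)"
    unfolding unary_unbiased_bbc_def
  proof (rule INF_greatest)
    fix A assume "A \<in> {A. unary_unbiased_alg n A}"
    then show "ennreal (1 / 256 * (real n) ^ 2) \<le> expected_runtime n (dlb n) A"
      using expected_runtime_ge n by blast
  qed
qed

end
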